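(* There exist universal constants $\kappa_1,\kappa_2>0$ such that the following holds. Consider the exponentially decaying power allocation $P_\ell=P\frac{e^{2\mathcal{C}/L}-1}{1-e^{-2\mathcal{C}}}e^{-2\mathcal{C}\ell/L}$, $\ell\in[L]$, with $L\ln M=nR$, fix $\tau>0$ and set $\nu_\ell=LP_\ell/(R\tau^2)$. Then for all sufficiently large $M$ and any $\delta\in(0,\frac12)$, $$x(\tau)\ge\Big(1-\frac{M^{-\kappa_1\delta^2}}{\delta\sqrt{\log M}}\Big)\sum_{\ell=1}^L\frac{P_\ell}{P}\mathbf 1\{\nu_\ell>2+\delta\}+\frac14\sum_{\ell=1}^L\frac{P_\ell}{P}\mathbf 1\Big\{2\Big(1-\frac{\kappa_2}{\sqrt{\log M}}\Big)\le\nu_\ell\le2+\delta\Big\}.$$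
   Context: $\sigma^2,P>0$, $\textsf{snr}=P/\sigma^2$, $\mathcal{C}=\frac12\ln(1+\textsf{snr})$, rate $R$ in nats. The function $$x(\tau):=\sum_{\ell=1}^L\frac{P_\ell}{P}\,\mathbb{E}\left[\frac{\exp\{\frac{\sqrt{nP_\ell}}{\tau}(U^\ell_1+\frac{\sqrt{nP_\ell}}{\tau})\}}{\exp\{\frac{\sqrt{nP_\ell}}{\tau}(U^\ell_1+\frac{\sqrt{nP_\ell}}{\tau})\}+\sum_{j=2}^M\exp\{\frac{\sqrt{nP_\ell}}{\tau}U^\ell_j\}}\right]$$ with $\{U^\ell_j\}$ i.i.d. $\mathcal{N}(0,1)$. *)

theory Defs
  imports "HOL-Probability.Probability"
begin

definition std_gauss :: "real measure" where
  "std_gauss = density lborel std_normal_density"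

definition capacity :: "real \<Rightarrow> real \<Rightarrow> real" where
  "capacity P sigma2 = (1/2) * ln (1 + P / sigma2)"

definition exp_power_alloc :: "real \<Rightarrow> real \<Rightarrow> nat \<Rightarrow> nat \<Rightarrow> real" where
  "exp_power_alloc P C L l =
     P * (exp (2 * C / real L) - 1) / (1 - exp (- 2 * C)) * exp (- 2 * C * real l / real L)"

definition section_term :: "nat \<Rightarrow> real \<Rightarrow> real" where
  "section_term M c =
     (\<integral>u. exp (c * (u 1 + c)) / (exp (c * (u 1 + c)) + (\<Sum>j\<in>{2..M}. exp (c * u j)))
        \<partial>(PiM {1..M} (\<lambda>_. std_gauss)))"

definition x_tau :: "nat \<Rightarrow> nat \<Rightarrow> nat \<Rightarrow> (nat \<Rightarrow> real) \<Rightarrow> real \<Rightarrow> real \<Rightarrow> real" where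
  "x_tau n M L Pl P \<tau> =
     (\<Sum>l=1..L. Pl l / P * section_term M (sqrt (real n * Pl l) / \<tau>))"

end

theory Submission
  imports Defs
begin

text \<open>
  Fix a section with signal strength \<open>c\<close> and put \<open>S = \<Sum>\<^sub>j\<^sub>\<ge>\<^sub>2 exp (c U\<^sub>j)\<close>. For any weight
  \<open>0 \<le> w \<le> 1\<close> one has \<open>a / (a + S) \<ge> w (1 - S / a)\<close>, so by independence and
  \<open>E exp (c U\<^sub>j) = exp (c\<^sup>2/2)\<close> the section term is at least
  \<open>E w(U\<^sub>1) - (M - 1) exp (-c\<^sup>2/2) E [w(U\<^sub>1) exp (-c U\<^sub>1)]\<close>.
  Writing \<open>(M - 1) exp (-c\<^sup>2/2) = exp (-c s)\<close>, the weight \<open>w = 1{U\<^sub>1 > -s}\<close> leaves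
  \<open>1 - P(U \<ge> s) - \<phi>(s)/(c - s)\<close>, which Mills' ratio makes \<open>1 - M\<^bsup>-\<kappa>\<^sub>1\<delta>\<^sup>2\<^esup>/(\<delta>\<surd>log M)\<close>
  once \<open>c\<^sup>2 = \<nu> log M > (2 + \<delta>) log M\<close>; the weight \<open>w = 1{U\<^sub>1 > 1/5}\<close> gives at least
  \<open>(1 - e\<^sup>-\<^sup>2)(1/2 - 1/(5\<surd>(2\<pi>))) \<ge> 1/4\<close> as soon as \<open>\<nu> \<ge> 2 (1 - 1/(10 \<surd>log M))\<close>.
  Averaging over the sections with weights \<open>P\<^sub>\<ell>/P\<close> gives the theorem; the shape of the
  power allocation only enters through \<open>P\<^sub>\<ell> > 0\<close>.
\<close>

abbreviation \<phi> :: "real \<Rightarrow> real" where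
  "\<phi> \<equiv> std_normal_density"

lemma std_normal_density_pos: "\<phi> x > 0"
  by (simp add: normal_density_pos)

lemma std_normal_density_minus [simp]: "\<phi> (- x) = \<phi> x"
  by (simp add: std_normal_density_def)

lemma std_normal_density_le_tangent: "\<phi> u \<le> \<phi> v * exp (- v * (u - v))"
proof -
  have "- u\<^sup>2 / 2 \<le> - v\<^sup>2 / 2 + (- v * (u - v))"
    using zero_le_power2[of "u - v"] by (simp add: power2_eq_square algebra_simps)
  hence "exp (- u\<^sup>2 / 2) \<le> exp (- v\<^sup>2 / 2) * exp (- v * (u - v))"
    by (simp add: exp_add[symmetric])
  thus ?thesis unfolding std_normal_density_def
    by (simp add: mult.assoc divide_right_mono)
qed

lemma std_normal_density_antimono: "\<bar>x\<bar> \<le> \<bar>r\<bar> \<Longrightarrow> \<phi> r \<le> \<phi> x"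
  unfolding std_normal_density_def
  by (simp add: divide_right_mono abs_le_square_iff)

lemma inverse_sqrt_2pi_bounds:
  "3989/10000 \<le> 1 / sqrt (2 * pi)" "1 / sqrt (2 * pi) \<le> (399/1000 :: real)"
proof -
  have pi: "3141592653588/1000000000000 \<le> pi" "pi \<le> 31415926535899/10000000000000"
    using pi_approx by simp_all
  have "25063/10000 \<le> sqrt (2 * pi)"
    using pi by (intro real_le_rsqrt) (simp add: power2_eq_square)
  thus "1 / sqrt (2 * pi) \<le> (399/1000 :: real)"
    using divide_left_mono[of "25063/10000" "sqrt (2 * pi)" 1] by simp
  have "sqrt (2 * pi) \<le> sqrt ((25067/10000)\<^sup>2)"
    using pi by (intro real_sqrt_le_mono) (simp add: power2_eq_square)
  hence "sqrt (2 * pi) \<le> 25067/10000" by simp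
  thus "3989/10000 \<le> 1 / sqrt (2 * pi)"
    using divide_left_mono[of "sqrt (2 * pi)" "25067/10000" 1] by simp
qed

lemma std_normal_density_le: "\<phi> x \<le> 399/1000"
proof -
  have "\<phi> x \<le> 1 / sqrt (2 * pi)"
    unfolding std_normal_density_def by (simp add: divide_right_mono)
  thus ?thesis using inverse_sqrt_2pi_bounds(2) by linarith
qed

lemma std_normal_density_bounds:
  "3989/10000 * (1 - a\<^sup>2 / 2) \<le> \<phi> a" "\<phi> a \<le> 399/1000 * (1 / (1 + a\<^sup>2 / 2))"
proof -
  have p: "3989/10000 \<le> 1 / sqrt (2 * pi)" "0 \<le> 1 / sqrt (2 * pi)" "1 / sqrt (2 * pi) \<le> 399/1000"
    using inverse_sqrt_2pi_bounds by linarith+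
  have e: "1 - a\<^sup>2 / 2 \<le> exp (- a\<^sup>2 / 2)"
    using exp_ge_add_one_self[of "- a\<^sup>2 / 2"] by simp
  show "3989/10000 * (1 - a\<^sup>2 / 2) \<le> \<phi> a"
  proof (cases "0 \<le> 1 - a\<^sup>2 / 2")
    case True
    from mult_mono[OF p(1) e p(2) True] show ?thesis
      unfolding std_normal_density_def .
  next
    case False
    hence "3989/10000 * (1 - a\<^sup>2 / 2) \<le> 0" by (intro mult_nonneg_nonpos) auto
    thus ?thesis using std_normal_density_pos[of a] by linarith
  qed
  have "exp (- a\<^sup>2 / 2) = 1 / exp (a\<^sup>2 / 2)"
    using exp_minus'[of "a\<^sup>2 / 2"] by simp
  also have "\<dots> \<le> 1 / (1 + a\<^sup>2 / 2)"
    using exp_ge_add_one_self[of "a\<^sup>2 / 2"]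
    by (intro divide_left_mono mult_pos_pos add_pos_nonneg) auto
  finally have "exp (- a\<^sup>2 / 2) \<le> 1 / (1 + a\<^sup>2 / 2)" .
  from mult_mono[OF p(3) this _ exp_ge_zero] show "\<phi> a \<le> 399/1000 * (1 / (1 + a\<^sup>2 / 2))"
    unfolding std_normal_density_def by simp
qed

section \<open>Gaussian integrals\<close>

lemma integral_lborel_reflect: "(\<integral>x. f x \<partial>lborel) = (\<integral>x. f (- x) \<partial>lborel)"
  for f :: "real \<Rightarrow> real"
  using lborel_integral_real_affine[of "-1" f 0] by simp

lemma integrable_std_normal_density_indicator:
  "A \<in> sets borel \<Longrightarrow> integrable lborel (\<lambda>x. indicator A x * \<phi> x)"
  using integrable_mult_indicator[of A lborel \<phi>] by simp

lemma has_bochner_integral_exp_tail: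
  fixes a c :: real
  assumes "a > 0"
  shows "has_bochner_integral lborel (\<lambda>x. indicator {c..} x * exp (- a * x)) (exp (- a * c) / a)"
proof -
  have "(\<lambda>x. indicator {c..} x * exp (- a * x)) = (\<lambda>x. if x \<in> {c..} then exp (- a * x) else 0)"
    by (auto simp: indicator_def)
  hence "((\<lambda>x. indicator {c..} x * exp (- a * x)) has_integral exp (- a * c) / a) UNIV"
    using has_integral_exp_minus_to_infinity[OF assms]
      has_integral_restrict_UNIV[of "{c..}" "\<lambda>x. exp (- a * x)"]
    by simp
  hence "integral\<^sup>N lborel (\<lambda>x. indicator {c..} x * exp (- a * x)) = exp (- a * c) / a"
    by (intro nn_integral_has_integral_lborel) auto
  thus ?thesis
    using assms by (intro has_bochner_integral_nn_integral) auto
qed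

lemma has_bochner_integral_std_normal_mgf:
  "has_bochner_integral lborel (\<lambda>x. \<phi> x * exp (c * x)) (exp (c\<^sup>2 / 2))"
proof -
  have "\<phi> x * exp (c * x) = exp (c\<^sup>2 / 2) * normal_density c 1 x" for x
  proof -
    have "- x\<^sup>2 / 2 + c * x = c\<^sup>2 / 2 + (- (x - c)\<^sup>2 / 2)"
      by (simp add: power2_eq_square field_simps)
    thus ?thesis unfolding normal_density_def by (simp add: mult_exp_exp)
  qed
  moreover have "has_bochner_integral lborel (\<lambda>x. exp (c\<^sup>2 / 2) * normal_density c 1 x) (exp (c\<^sup>2 / 2) * 1)"
    by (intro has_bochner_integral_mult_right) (simp add: has_bochner_integral_iff)
  ultimately show ?thesis by simp
qed

lemma std_normal_half_line_integrals:
  "(\<integral>x. indicator {0<..} x * \<phi> x \<partial>lborel) \<le> 1/2"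
  "(\<integral>x. indicator {0..} x * \<phi> x \<partial>lborel) \<ge> 1/2"
proof -
  define A where "A = (\<integral>x. indicator {..<0} x * \<phi> x \<partial>lborel)"
  define B where "B = (\<integral>x. indicator {0<..} x * \<phi> x \<partial>lborel)"
  define B0 where "B0 = (\<integral>x. indicator {0..} x * \<phi> x \<partial>lborel)"
  have iA: "integrable lborel (\<lambda>x. indicator {..<0} x * \<phi> x)"
    and iB: "integrable lborel (\<lambda>x. indicator {0<..} x * \<phi> x)"
    and iB0: "integrable lborel (\<lambda>x. indicator {0..} x * \<phi> x)"
    by (intro integrable_std_normal_density_indicator; simp)+
  have "A = (\<integral>x. indicator {..<0} (- x) * \<phi> (- x) \<partial>lborel)"
    unfolding A_def by (rule integral_lborel_reflect)
  also have "\<dots> = B" unfolding B_def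
    by (intro Bochner_Integration.integral_cong) (auto simp: indicator_def)
  finally have "A = B" .
  have "A + B0 = (\<integral>x. indicator {..<0} x * \<phi> x + indicator {0..} x * \<phi> x \<partial>lborel)"
    unfolding A_def B0_def using iA iB0 by simp
  also have "\<dots> = (\<integral>x. \<phi> x \<partial>lborel)"
    by (intro Bochner_Integration.integral_cong) (auto simp: indicator_def)
  finally have "A + B0 = 1" by simp
  have "A + B = (\<integral>x. indicator {..<0} x * \<phi> x + indicator {0<..} x * \<phi> x \<partial>lborel)"
    unfolding A_def B_def using iA iB by simp
  also have "\<dots> \<le> (\<integral>x. \<phi> x \<partial>lborel)"
    using iA iB std_normal_density_pos
    by (intro integral_mono) (auto simp: indicator_def less_imp_le)
  finally have "A + B \<le> 1" by simp
  have "B \<le> B0" unfolding B_def B0_def using iB iB0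
    by (intro integral_mono) (auto simp: indicator_def)
  show "B \<le> 1/2" using \<open>A = B\<close> \<open>A + B \<le> 1\<close> by simp
  show "B0 \<ge> 1/2" using \<open>A = B\<close> \<open>A + B0 = 1\<close> \<open>B \<le> B0\<close> by simp
qed

lemma std_normal_tail_le_half_minus_interval:
  assumes "0 \<le> r" "r \<le> s" "0 < s"
  shows "(\<integral>x. indicator {s..} x * \<phi> x \<partial>lborel) \<le> 1/2 - r * \<phi> r"
proof -
  note int = integrable_std_normal_density_indicator
  have interval: "r * \<phi> r \<le> (\<integral>x. indicator {0<..<r} x * \<phi> x \<partial>lborel)"
  proof -
    have "(\<integral>x. \<phi> r * indicator {0<..<r} x \<partial>lborel) \<le> (\<integral>x. indicator {0<..<r} x * \<phi> x \<partial>lborel)"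
    proof (rule integral_mono)
      show "integrable lborel (\<lambda>x. \<phi> r * indicator {0<..<r} x)"
        using assms by (intro integrable_mult_right) (simp add: integrable_indicator_iff)
      show "integrable lborel (\<lambda>x. indicator {0<..<r} x * \<phi> x)"
        by (rule int) simp
    qed (use std_normal_density_antimono[of _ r] in \<open>auto simp: indicator_def\<close>)
    thus ?thesis using assms by (simp add: mult.commute)
  qed
  have "(\<integral>x. indicator {s..} x * \<phi> x \<partial>lborel)
     \<le> (\<integral>x. indicator {0<..} x * \<phi> x - indicator {0<..<r} x * \<phi> x \<partial>lborel)"
    using assms std_normal_density_pos
    by (intro integral_mono int Bochner_Integration.integrable_diff)
      (auto simp: indicator_def less_imp_le)
  also have "\<dots> = (\<integral>x. indicator {0<..} x * \<phi> x \<partial>lborel)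
      - (\<integral>x. indicator {0<..<r} x * \<phi> x \<partial>lborel)"
    by (intro Bochner_Integration.integral_diff int) auto
  finally show ?thesis using std_normal_half_line_integrals(1) interval by linarith
qed

lemma std_normal_tail_ge:
  assumes "t \<ge> 0"
  shows "(\<integral>x. indicator {t<..} x * \<phi> x \<partial>lborel) \<ge> 1/2 - 399/1000 * t"
proof -
  note int = integrable_std_normal_density_indicator
  have "(\<integral>x. indicator {0..t} x * \<phi> x \<partial>lborel) \<le> (\<integral>x. 399/1000 * indicator {0..t} x \<partial>lborel)"
  proof (rule integral_mono)
    show "integrable lborel (\<lambda>x. 399/1000 * indicator {0..t} x :: real)"
      using assms by (intro integrable_mult_right) (simp add: integrable_indicator_iff)
    show "integrable lborel (\<lambda>x. indicator {0..t} x * \<phi> x)"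
      by (rule int) simp
  qed (use std_normal_density_le in \<open>auto simp: indicator_def\<close>)
  also have "\<dots> = 399/1000 * t" using assms by simp
  finally have interval: "(\<integral>x. indicator {0..t} x * \<phi> x \<partial>lborel) \<le> 399/1000 * t" .
  have "(\<integral>x. indicator {0..} x * \<phi> x \<partial>lborel) - (\<integral>x. indicator {0..t} x * \<phi> x \<partial>lborel)
     = (\<integral>x. indicator {0..} x * \<phi> x - indicator {0..t} x * \<phi> x \<partial>lborel)"
    by (intro Bochner_Integration.integral_diff[symmetric] int) auto
  also have "\<dots> \<le> (\<integral>x. indicator {t<..} x * \<phi> x \<partial>lborel)"
    using assms std_normal_density_pos
    by (intro integral_mono int Bochner_Integration.integrable_diff)
      (auto simp: indicator_def less_imp_le)
  finally show ?thesis using std_normal_half_line_integrals(2) interval by linarith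
qed

lemma std_normal_tail_Mills:
  assumes s: "s > 0"
  shows "(\<integral>x. indicator {s..} x * \<phi> x \<partial>lborel) \<le> \<phi> s / s"
proof -
  note h = has_bochner_integral_exp_tail[OF s, of s]
  have "(\<integral>x. indicator {s..} x * \<phi> x \<partial>lborel)
      \<le> (\<integral>x. (\<phi> s * exp (s * s)) * (indicator {s..} x * exp (- s * x)) \<partial>lborel)"
  proof (rule integral_mono)
    show "integrable lborel (\<lambda>x. indicator {s..} x * \<phi> x)"
      by (rule integrable_std_normal_density_indicator) auto
    show "integrable lborel (\<lambda>x. (\<phi> s * exp (s * s)) * (indicator {s..} x * exp (- s * x)))"
      using h by (intro integrable_mult_right) (auto simp: has_bochner_integral_iff)
    fix x
    have "\<phi> x \<le> \<phi> s * exp (s * s) * exp (- s * x)"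
      using std_normal_density_le_tangent[of x s] by (simp add: mult_exp_exp algebra_simps)
    thus "indicator {s..} x * \<phi> x \<le> (\<phi> s * exp (s * s)) * (indicator {s..} x * exp (- s * x))"
      by (auto simp: indicator_def)
  qed
  also have "\<dots> = \<phi> s / s"
    using h by (simp add: has_bochner_integral_iff mult_exp_exp)
  finally show ?thesis .
qed

lemma std_normal_tilted_tail_le:
  assumes "c > s"
  shows "(\<integral>x. indicator {- s<..} x * \<phi> x * exp (- c * (x + s)) \<partial>lborel) \<le> \<phi> s / (c - s)"
proof -
  have a: "c - s > 0" using assms by simp
  note h = has_bochner_integral_exp_tail[OF a, of "- s"]
  define g where "g x = (\<phi> s * exp (- (c - s) * s)) * (indicator {- s..} x * exp (- (c - s) * x))" for x
  have ig: "integrable lborel g"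
    using h unfolding g_def by (intro integrable_mult_right) (auto simp: has_bochner_integral_iff)
  have le: "indicator {- s<..} x * \<phi> x * exp (- c * (x + s)) \<le> g x" for x
  proof -
    have "\<phi> x * exp (- c * (x + s)) \<le> \<phi> s * exp (s * (x + s)) * exp (- c * (x + s))"
      using std_normal_density_le_tangent[of x "- s"] by simp
    also have "\<dots> = \<phi> s * exp (- (c - s) * s) * exp (- (c - s) * x)"
      by (simp add: mult_exp_exp algebra_simps)
    finally show ?thesis by (auto simp: g_def indicator_def)
  qed
  have g_nonneg: "0 \<le> g x" for x
    using std_normal_density_pos[of s] by (simp add: g_def)
  have "(\<integral>x. indicator {- s<..} x * \<phi> x * exp (- c * (x + s)) \<partial>lborel) \<le> integral\<^sup>L lborel g"
  proof (rule integral_mono[OF Bochner_Integration.integrable_bound[OF ig] ig le])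
    show "AE x in lborel. norm (indicator {- s<..} x * \<phi> x * exp (- c * (x + s))) \<le> norm (g x)"
      using le std_normal_density_pos g_nonneg
      by (intro AE_I2) (auto simp: indicator_def abs_mult less_imp_le)
  qed simp
  also have "\<dots> = \<phi> s / (c - s)"
    using h unfolding g_def by (simp add: has_bochner_integral_iff mult_exp_exp)
  finally show ?thesis .
qed

lemma prob_space_std_gauss: "prob_space std_gauss"
  unfolding std_gauss_def by (rule prob_space_normal_density) simp

lemma sets_std_gauss [measurable_cong, simp]: "sets std_gauss = sets borel"
  unfolding std_gauss_def by simp

lemma space_std_gauss [simp]: "space std_gauss = UNIV"
  unfolding std_gauss_def by simp

lemma integral_std_gauss:
  "f \<in> borel_measurable borel \<Longrightarrow> integral\<^sup>L std_gauss f = (\<integral>x. \<phi> x * f x \<partial>lborel)"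
  unfolding std_gauss_def by (subst integral_density) auto

lemma integrable_std_gauss_iff:
  "f \<in> borel_measurable borel \<Longrightarrow> integrable std_gauss f \<longleftrightarrow> integrable lborel (\<lambda>x. \<phi> x * f x)"
  unfolding std_gauss_def by (subst integrable_density) auto

lemma integrable_std_gauss_bounded_mult_exp:
  assumes [measurable]: "w \<in> borel_measurable borel" and bound: "\<And>x. \<bar>w x\<bar> \<le> B"
  shows "integrable std_gauss (\<lambda>x. w x * exp (a * x))"
proof (subst integrable_std_gauss_iff)
  show "integrable lborel (\<lambda>x. \<phi> x * (w x * exp (a * x)))"
  proof (rule Bochner_Integration.integrable_bound)
    show "integrable lborel (\<lambda>x. B * (\<phi> x * exp (a * x)))"
      using has_bochner_integral_std_normal_mgf[of a]
      by (intro integrable_mult_right) (simp add: has_bochner_integral_iff)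
    show "AE x in lborel. norm (\<phi> x * (w x * exp (a * x))) \<le> norm (B * (\<phi> x * exp (a * x)))"
      using bound std_normal_density_pos order_trans[OF abs_ge_zero bound]
      by (intro AE_I2) (auto simp: abs_mult less_imp_le mult_right_mono)
  qed simp
qed simp

lemma integral_PiM_two_coordinates:
  fixes f g :: "'a \<Rightarrow> real" and I :: "'i set"
  assumes "prob_space M" "finite I" "i \<in> I" "j \<in> I" "i \<noteq> j"
    and f: "integrable M f" and g: "integrable M g"
  shows "integrable (PiM I (\<lambda>_. M)) (\<lambda>x. f (x i) * g (x j))"
    and "(\<integral>x. f (x i) * g (x j) \<partial>PiM I (\<lambda>_. M)) = integral\<^sup>L M f * integral\<^sup>L M g"
proof -
  interpret M: prob_space M by fact
  interpret product_prob_space "\<lambda>_::'i. M"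
    unfolding product_prob_space_def product_prob_space_axioms_def product_sigma_finite_def
    by (auto simp: M.sigma_finite_measure_axioms M.prob_space_axioms)
  define h where "h k = (if k = i then f else if k = j then g else (\<lambda>_. 1))" for k
  have prod_two: "(\<Prod>k\<in>I. a k) = a i * a j" if "\<And>k. k \<in> I \<Longrightarrow> k \<noteq> i \<Longrightarrow> k \<noteq> j \<Longrightarrow> a k = 1"
    for a :: "'i \<Rightarrow> real"
  proof -
    have "(\<Prod>k\<in>I. a k) = a i * (\<Prod>k\<in>I - {i}. a k)"
      using assms by (simp add: prod.remove)
    also have "(\<Prod>k\<in>I - {i}. a k) = a j * (\<Prod>k\<in>I - {i} - {j}. a k)"
      using assms by (intro prod.remove) auto
    also have "(\<Prod>k\<in>I - {i} - {j}. a k) = 1"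
      using that by (intro prod.neutral) auto
    finally show ?thesis by simp
  qed
  have "integrable M (h k)" for k
    using f g by (auto simp: h_def)
  moreover have "(\<Prod>k\<in>I. h k (x k)) = f (x i) * g (x j)" for x
    using assms by (subst prod_two) (auto simp: h_def)
  moreover have "(\<Prod>k\<in>I. integral\<^sup>L M (h k)) = integral\<^sup>L M f * integral\<^sup>L M g"
    using assms M.prob_space by (subst prod_two) (auto simp: h_def)
  ultimately show "integrable (PiM I (\<lambda>_. M)) (\<lambda>x. f (x i) * g (x j))"
    and "(\<integral>x. f (x i) * g (x j) \<partial>PiM I (\<lambda>_. M)) = integral\<^sup>L M f * integral\<^sup>L M g"
    using product_integrable_prod[of I h] product_integral_prod[of I h] \<open>finite I\<close> by simp_all
qed

section \<open>Lower bounds for a single section\<close>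

definition section_integrand :: "nat \<Rightarrow> real \<Rightarrow> (nat \<Rightarrow> real) \<Rightarrow> real" where
  "section_integrand M c u =
     exp (c * (u 1 + c)) / (exp (c * (u 1 + c)) + (\<Sum>j\<in>{2..M}. exp (c * u j)))"

lemma section_term_eq_integral:
  "section_term M c = (\<integral>u. section_integrand M c u \<partial>PiM {1..M} (\<lambda>_. std_gauss))"
  unfolding section_term_def section_integrand_def ..

lemma section_integrand_bounds: "0 \<le> section_integrand M c u" "section_integrand M c u \<le> 1"
proof -
  have "0 \<le> (\<Sum>j\<in>{2..M}. exp (c * u j))" by (intro sum_nonneg) auto
  thus "0 \<le> section_integrand M c u" "section_integrand M c u \<le> 1"
    unfolding section_integrand_def
    by (auto intro!: divide_nonneg_pos add_pos_nonneg simp: divide_le_eq_1)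
qed

lemma integrable_section_integrand:
  assumes "M \<ge> 1"
  shows "integrable (PiM {1..M} (\<lambda>_. std_gauss)) (section_integrand M c)"
proof -
  interpret prob_space "PiM {1..M} (\<lambda>_. std_gauss)"
    by (intro prob_space_PiM prob_space_std_gauss)
  show ?thesis
  proof (rule integrable_const_bound[where B = 1])
    show "AE u in PiM {1..M} (\<lambda>_. std_gauss). norm (section_integrand M c u) \<le> 1"
      using section_integrand_bounds by (intro AE_I2) (simp add: abs_le_iff)
    show "section_integrand M c \<in> borel_measurable (PiM {1..M} (\<lambda>_. std_gauss))"
      using assms unfolding section_integrand_def by (measurable; simp)
  qed
qed

lemma section_term_nonneg: "section_term M c \<ge> 0"
  unfolding section_term_eq_integral using section_integrand_bounds(1)
  by (intro integral_nonneg_AE AE_I2)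

lemma weighted_one_minus_div_le_div_add:
  fixes a S v :: real
  assumes "a > 0" "S \<ge> 0" "0 \<le> v" "v \<le> 1"
  shows "v * (1 - S / a) \<le> a / (a + S)"
proof (cases "1 - S / a \<le> 0")
  case True
  hence "v * (1 - S / a) \<le> 0" using assms by (simp add: mult_nonneg_nonpos)
  also have "0 \<le> a / (a + S)" using assms by simp
  finally show ?thesis .
next
  case False
  hence "v * (1 - S / a) \<le> 1 - S / a" using assms by (simp add: mult_left_le_one_le)
  also have "(1 - S / a) * (a + S) = a - S * S / a" using assms by (simp add: field_simps)
  hence "1 - S / a \<le> a / (a + S)" using assms by (simp add: pos_le_divide_eq)
  finally show ?thesis .
qed

lemma integral_weight_minus_tilted_sum:
  fixes w W :: "real \<Rightarrow> real" and c :: real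
  assumes M: "M \<ge> 2" and w: "integrable std_gauss w" and W: "integrable std_gauss W"
  defines "g \<equiv> \<lambda>u. w (u 1) - (\<Sum>j\<in>{2..M}. W (u 1) * exp (c * u j))"
  shows "integrable (PiM {1..M} (\<lambda>_. std_gauss)) g"
    and "integral\<^sup>L (PiM {1..M} (\<lambda>_. std_gauss)) g
           = integral\<^sup>L std_gauss w - (real M - 1) * integral\<^sup>L std_gauss W * exp (c\<^sup>2 / 2)"
proof -
  interpret G: prob_space std_gauss by (rule prob_space_std_gauss)
  define PM where "PM = PiM {1..M} (\<lambda>_::nat. std_gauss)"
  note two = integral_PiM_two_coordinates[OF prob_space_std_gauss, of "{1..M}" 1]
  have exp_int: "integrable std_gauss (\<lambda>x. exp (c * x))"
    and exp_mean: "(\<integral>x. exp (c * x) \<partial>std_gauss) = exp (c\<^sup>2 / 2)"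
    using has_bochner_integral_std_normal_mgf[of c]
    by (simp_all add: integrable_std_gauss_iff integral_std_gauss has_bochner_integral_iff)
  have "integrable PM (\<lambda>u. w (u 1) * 1)" "(\<integral>u. w (u 1) * 1 \<partial>PM) = integral\<^sup>L std_gauss w"
    using two[of 2 w "\<lambda>_. 1"] M w G.prob_space by (auto simp: PM_def)
  hence iw: "integrable PM (\<lambda>u. w (u 1))" "(\<integral>u. w (u 1) \<partial>PM) = integral\<^sup>L std_gauss w"
    by simp_all
  have iW: "integrable PM (\<lambda>u. W (u 1) * exp (c * u j))"
    "(\<integral>u. W (u 1) * exp (c * u j) \<partial>PM) = integral\<^sup>L std_gauss W * exp (c\<^sup>2 / 2)"
    if "j \<in> {2..M}" for j
    using two[of j W "\<lambda>x. exp (c * x)"] that W exp_int exp_mean by (auto simp: PM_def)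
  show "integrable PM g"
    unfolding g_def using iw iW by (intro Bochner_Integration.integrable_diff integrable_sum) auto
  have "integral\<^sup>L PM g
      = (\<integral>u. w (u 1) \<partial>PM) - (\<Sum>j\<in>{2..M}. \<integral>u. W (u 1) * exp (c * u j) \<partial>PM)"
    unfolding g_def using iw iW
    by (subst Bochner_Integration.integral_diff)
      (auto intro!: integrable_sum simp: Bochner_Integration.integral_sum)
  also have "\<dots> = integral\<^sup>L std_gauss w - (real M - 1) * integral\<^sup>L std_gauss W * exp (c\<^sup>2 / 2)"
    using iw iW M by (simp add: of_nat_diff)
  finally show "integral\<^sup>L PM g
      = integral\<^sup>L std_gauss w - (real M - 1) * integral\<^sup>L std_gauss W * exp (c\<^sup>2 / 2)" .
qed

lemma section_term_ge_weighted:
  fixes w :: "real \<Rightarrow> real"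
  assumes M: "M \<ge> 2" and w [measurable]: "w \<in> borel_measurable borel"
    and w01: "\<And>x. 0 \<le> w x" "\<And>x. w x \<le> 1"
  shows "section_term M c \<ge> (\<integral>x. \<phi> x * w x \<partial>lborel)
           - (real M - 1) * exp (- c\<^sup>2 / 2) * (\<integral>x. \<phi> x * w x * exp (- c * x) \<partial>lborel)"
proof -
  define PM where "PM = PiM {1..M} (\<lambda>_::nat. std_gauss)"
  define W where "W x = w x * exp (- c * (x + c))" for x
  have W_eq: "W = (\<lambda>x. exp (- c\<^sup>2) * (w x * exp (- c * x)))"
    by (simp add: fun_eq_iff W_def mult_exp_exp power2_eq_square algebra_simps)
  have iw: "integrable std_gauss w"
    using integrable_std_gauss_bounded_mult_exp[OF w, of 1 0] w01 by simp
  have iW: "integrable std_gauss W"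
    unfolding W_eq using integrable_std_gauss_bounded_mult_exp[OF w, of 1 "- c"] w01
    by (intro integrable_mult_right) (simp add: abs_le_iff)
  define g where "g u = w (u 1) - (\<Sum>j\<in>{2..M}. W (u 1) * exp (c * u j))" for u
  have "g u \<le> section_integrand M c u" for u
  proof -
    define a where "a = exp (c * (u 1 + c))"
    define S where "S = (\<Sum>j\<in>{2..M}. exp (c * u j))"
    have "W (u 1) = w (u 1) / a"
      unfolding W_def a_def by (simp add: exp_minus[symmetric] divide_inverse algebra_simps)
    hence "g u = w (u 1) * (1 - S / a)"
      unfolding g_def S_def by (simp add: sum_distrib_left sum_divide_distrib algebra_simps)
    also have "\<dots> \<le> a / (a + S)"
      using w01 by (intro weighted_one_minus_div_le_div_add) (auto simp: a_def S_def intro: sum_nonneg)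
    finally show ?thesis by (simp add: section_integrand_def a_def S_def)
  qed
  moreover have "integrable PM (section_integrand M c)"
    using M unfolding PM_def by (intro integrable_section_integrand) simp
  ultimately have "integral\<^sup>L PM g \<le> section_term M c"
    using integral_weight_minus_tilted_sum(1)[OF M iw iW]
    unfolding section_term_eq_integral PM_def g_def by (intro integral_mono) auto
  moreover have "integral\<^sup>L std_gauss W * exp (c\<^sup>2 / 2)
      = exp (- c\<^sup>2 / 2) * (\<integral>x. \<phi> x * w x * exp (- c * x) \<partial>lborel)"
  proof -
    have "integral\<^sup>L std_gauss W = (\<integral>x. exp (- c\<^sup>2) * (\<phi> x * w x * exp (- c * x)) \<partial>lborel)"
      by (simp add: integral_std_gauss W_eq ac_simps)
    moreover have "exp (- c\<^sup>2) * exp (c\<^sup>2 / 2) = exp (- c\<^sup>2 / 2)"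
      by (simp add: mult_exp_exp)
    ultimately show ?thesis by simp
  qed
  moreover have "integral\<^sup>L PM g
      = integral\<^sup>L std_gauss w - (real M - 1) * (integral\<^sup>L std_gauss W * exp (c\<^sup>2 / 2))"
    using integral_weight_minus_tilted_sum(2)[OF M iw iW, of c]
    unfolding PM_def g_def[abs_def] by (simp add: mult.assoc)
  ultimately show ?thesis by (simp add: integral_std_gauss mult.assoc)
qed

text \<open>The shift \<open>s\<close> solves \<open>exp (- c s) = (M - 1) exp (- c\<^sup>2/2)\<close>: the correct term
  \<open>exp (c (U\<^sub>1 + c))\<close> beats the mean of the competing sum exactly when \<open>U\<^sub>1 > - s\<close>.\<close>
lemma section_term_ge_tail:
  assumes M: "M \<ge> 2" and cs: "c > s" and shift: "exp (- c * s) = (real M - 1) * exp (- c\<^sup>2 / 2)"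
  shows "section_term M c \<ge> 1 - (\<integral>x. indicator {s..} x * \<phi> x \<partial>lborel) - \<phi> s / (c - s)"
proof -
  have "(\<integral>x. \<phi> x * indicator {- s<..} x \<partial>lborel) = (\<integral>x. \<phi> x - indicator {s..} x * \<phi> x \<partial>lborel)"
    by (subst integral_lborel_reflect) (auto intro!: Bochner_Integration.integral_cong simp: indicator_def)
  also have "\<dots> = 1 - (\<integral>x. indicator {s..} x * \<phi> x \<partial>lborel)"
    by (subst Bochner_Integration.integral_diff) (auto intro: integrable_std_normal_density_indicator)
  finally have mass: "(\<integral>x. \<phi> x * indicator {- s<..} x \<partial>lborel) = \<dots>" .
  have "(real M - 1) * exp (- c\<^sup>2 / 2) * (\<integral>x. \<phi> x * indicator {- s<..} x * exp (- c * x) \<partial>lborel)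
      = (\<integral>x. indicator {- s<..} x * \<phi> x * exp (- c * (x + s)) \<partial>lborel)"
    unfolding shift[symmetric]
    by (simp flip: integral_mult_right_zero add: mult_exp_exp algebra_simps)
  also have "\<dots> \<le> \<phi> s / (c - s)" by (rule std_normal_tilted_tail_le[OF cs])
  finally show ?thesis
    using section_term_ge_weighted[OF M, of "indicator {- s<..}" c] mass by (simp add: indicator_def)
qed

lemma section_term_ge_shifted:
  assumes M: "M \<ge> 2" and "c \<ge> 0" "t \<ge> 0" "t + s \<ge> 0"
    and shift: "exp (- c * s) = (real M - 1) * exp (- c\<^sup>2 / 2)"
  shows "section_term M c \<ge> (1 - exp (- c * (t + s))) * (1/2 - 399/1000 * t)"
proof -
  define T where "T = (\<integral>x. indicator {t<..} x * \<phi> x \<partial>lborel)"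
  have "(real M - 1) * exp (- c\<^sup>2 / 2) * (\<integral>x. \<phi> x * indicator {t<..} x * exp (- c * x) \<partial>lborel)
      = (\<integral>x. exp (- c * s) * (\<phi> x * indicator {t<..} x * exp (- c * x)) \<partial>lborel)"
    unfolding shift by simp
  also have "\<dots> \<le> (\<integral>x. exp (- c * (t + s)) * (indicator {t<..} x * \<phi> x) \<partial>lborel)"
  proof (rule integral_mono)
    have decay: "x > t \<Longrightarrow> exp (- c * x) \<le> exp (- c * t)" for x
      using assms by (simp add: mult_left_mono)
    show "integrable lborel (\<lambda>x. exp (- c * (t + s)) * (indicator {t<..} x * \<phi> x))"
      by (intro integrable_mult_right integrable_std_normal_density_indicator) auto
    show "integrable lborel (\<lambda>x. exp (- c * s) * (\<phi> x * indicator {t<..} x * exp (- c * x)))"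
    proof (intro integrable_mult_right, rule Bochner_Integration.integrable_bound)
      show "integrable lborel (\<lambda>x. exp (- c * t) * (indicator {t<..} x * \<phi> x))"
        by (intro integrable_mult_right integrable_std_normal_density_indicator) auto
      show "AE x in lborel. norm (\<phi> x * indicator {t<..} x * exp (- c * x))
          \<le> norm (exp (- c * t) * (indicator {t<..} x * \<phi> x))"
        using decay std_normal_density_pos
        by (intro AE_I2) (auto simp: indicator_def abs_mult less_imp_le mult_left_mono)
    qed simp
    fix x
    show "exp (- c * s) * (\<phi> x * indicator {t<..} x * exp (- c * x))
        \<le> exp (- c * (t + s)) * (indicator {t<..} x * \<phi> x)"
      using decay[of x] std_normal_density_pos[of x]
      by (auto simp: indicator_def mult_exp_exp algebra_simps simp flip: exp_add intro: mult_left_mono)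
  qed
  also have "\<dots> = exp (- c * (t + s)) * T" by (simp add: T_def)
  finally have "section_term M c \<ge> (1 - exp (- c * (t + s))) * T"
    using section_term_ge_weighted[OF M, of "indicator {t<..}" c]
    by (simp add: T_def algebra_simps mult.commute)
  moreover have "0 \<le> 1 - exp (- c * (t + s))" using assms by simp
  ultimately show ?thesis
    using std_normal_tail_ge[OF \<open>t \<ge> 0\<close>] unfolding T_def[symmetric]
    by (meson mult_left_mono order_trans)
qed

section \<open>Numerical estimates\<close>

text \<open>In the bounds below \<open>Q\<close> stands for the tail \<open>P(U \<ge> s)\<close> and \<open>y = \<delta> \<surd>log M\<close>; the
  inequality \<open>y Q + \<phi>(s)/2 \<le> exp (- y\<^sup>2/10000)\<close> is what turns the tail bound into the
  rate \<open>M\<^bsup>-\<delta>\<^sup>2/10000\<^esup> / (\<delta> \<surd>log M)\<close>.\<close>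
lemma tail_estimate_bounded_threshold:
  fixes a b s y Y Q :: real
  assumes a: "0 \<le> a" "a \<le> s" and "s \<le> b" and y: "y > 0" "y\<^sup>2 \<le> 10 * s\<^sup>2"
    and Y: "0 \<le> Y" "10 * b\<^sup>2 \<le> Y\<^sup>2" and Q: "0 \<le> Q" "Q \<le> 1/2 - a * \<phi> a"
    and numeric: "Y * (1/2 - a * (3989/10000 * (1 - a\<^sup>2 / 2))) + 399/1000 * (1 / (1 + a\<^sup>2 / 2)) / 2
                    \<le> 1 - Y\<^sup>2 / 10000"
  shows "y * Q + \<phi> s / 2 \<le> exp (- y\<^sup>2 / 10000)"
proof -
  have "s\<^sup>2 \<le> b\<^sup>2" using a \<open>s \<le> b\<close> by (intro power_mono) auto
  hence y2: "y\<^sup>2 \<le> Y\<^sup>2" using y Y by linarith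
  hence "y \<le> Y" using Y(1) by (rule power2_le_imp_le)
  moreover have "a * (3989/10000 * (1 - a\<^sup>2 / 2)) \<le> a * \<phi> a"
    using std_normal_density_bounds(1) a(1) by (rule mult_left_mono)
  hence "Q \<le> 1/2 - a * (3989/10000 * (1 - a\<^sup>2 / 2))" using Q by linarith
  ultimately have yQ: "y * Q \<le> Y * (1/2 - a * (3989/10000 * (1 - a\<^sup>2 / 2)))"
    using Y(1) Q(1) by (rule mult_mono)
  have "\<phi> s \<le> \<phi> a" using a by (intro std_normal_density_antimono) simp
  hence "\<phi> s \<le> 399/1000 * (1 / (1 + a\<^sup>2 / 2))"
    using std_normal_density_bounds(2)[of a] by (rule order_trans)
  hence "\<phi> s / 2 \<le> 399/1000 * (1 / (1 + a\<^sup>2 / 2)) / 2" by (rule divide_right_mono) simp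
  with yQ have "y * Q + \<phi> s / 2
      \<le> Y * (1/2 - a * (3989/10000 * (1 - a\<^sup>2 / 2))) + 399/1000 * (1 / (1 + a\<^sup>2 / 2)) / 2"
    by (rule add_mono)
  also have "\<dots> \<le> 1 - y\<^sup>2 / 10000" using numeric y2 by simp
  also have "\<dots> \<le> exp (- y\<^sup>2 / 10000)"
    using exp_ge_add_one_self[of "- y\<^sup>2 / 10000"] by simp
  finally show ?thesis .
qed

lemma tail_estimate_large_threshold:
  fixes s y Q :: real
  assumes s: "s > 9/10" and "y > 0" "y\<^sup>2 \<le> 10 * s\<^sup>2" "0 \<le> Q" and Mills: "Q \<le> \<phi> s / s"
  shows "y * Q + \<phi> s / 2 \<le> exp (- y\<^sup>2 / 10000)"
proof -
  have "y\<^sup>2 \<le> (31623/10000 * s)\<^sup>2"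
  proof -
    have "10 * s\<^sup>2 \<le> (31623/10000)\<^sup>2 * s\<^sup>2"
      by (intro mult_right_mono) (auto simp: power2_eq_square)
    thus ?thesis using assms(3) power_mult_distrib[of "31623/10000" s 2] by linarith
  qed
  hence "y \<le> 31623/10000 * s" by (rule power2_le_imp_le) (use s in simp)
  hence "y * Q \<le> 31623/10000 * s * (\<phi> s / s)"
    using assms by (intro mult_mono) auto
  hence "y * Q + \<phi> s / 2 \<le> 36623/10000 * \<phi> s" using s by simp
  also have "\<dots> \<le> 36623/10000 * (399/1000) * exp (- s\<^sup>2 / 2)"
  proof -
    have "\<phi> s \<le> 399/1000 * exp (- s\<^sup>2 / 2)"
      unfolding std_normal_density_def using inverse_sqrt_2pi_bounds(2)
      by (intro mult_right_mono) auto
    thus ?thesis by simp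
  qed
  also have "\<dots> \<le> exp (- s\<^sup>2 / 2) * exp (499/1000 * s\<^sup>2)"
  proof -
    have "(9/10)\<^sup>2 \<le> s\<^sup>2" using s by (intro power_mono) auto
    hence "404/1000 \<le> 499/1000 * s\<^sup>2" by (simp add: power_divide)
    moreover from this have "(404/1000)\<^sup>2 \<le> (499/1000 * s\<^sup>2)\<^sup>2" by (intro power_mono) auto
    ultimately have "36623/10000 * (399/1000) \<le> 1 + 499/1000 * s\<^sup>2 + (499/1000 * s\<^sup>2)\<^sup>2 / 2"
      by (simp add: power2_eq_square)
    also have "\<dots> \<le> exp (499/1000 * s\<^sup>2)" by (intro exp_lower_Taylor_quadratic) simp
    finally show ?thesis by (simp add: mult.commute)
  qed
  also have "\<dots> = exp (- s\<^sup>2 / 1000)" by (simp add: mult_exp_exp)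
  also have "\<dots> \<le> exp (- y\<^sup>2 / 10000)" using assms by simp
  finally show ?thesis .
qed

lemma tail_estimate:
  fixes s y Q :: real
  assumes "s > 0" "y > 0" "y\<^sup>2 \<le> 10 * s\<^sup>2" "0 \<le> Q"
    and interval: "\<And>r. 0 \<le> r \<Longrightarrow> r \<le> s \<Longrightarrow> Q \<le> 1/2 - r * \<phi> r"
    and Mills: "Q \<le> \<phi> s / s"
  shows "y * Q + \<phi> s / 2 \<le> exp (- y\<^sup>2 / 10000)"
proof -
  consider "s \<le> 45/100" | "45/100 < s" "s \<le> 7/10" | "7/10 < s" "s \<le> 9/10" | "9/10 < s"
    by linarith
  thus ?thesis
  proof cases
    case 1
    show ?thesis
      using assms 1 interval[of 0]
      by (intro tail_estimate_bounded_threshold[of 0 s "45/100" y "143/100" Q])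
        (auto simp: power2_eq_square)
  next
    case 2
    show ?thesis
      using assms 2 interval[of "45/100"]
      by (intro tail_estimate_bounded_threshold[of "45/100" s "7/10" y "2214/1000" Q])
        (auto simp: power2_eq_square)
  next
    case 3
    show ?thesis
      using assms 3 interval[of "7/10"]
      by (intro tail_estimate_bounded_threshold[of "7/10" s "9/10" y "28461/10000" Q])
        (auto simp: power2_eq_square)
  next
    case 4
    thus ?thesis using tail_estimate_large_threshold assms by blast
  qed
qed

section \<open>The two regimes of the signal strength\<close>

definition section_shift :: "nat \<Rightarrow> real \<Rightarrow> real" where
  "section_shift M c = (c\<^sup>2 / 2 - ln (real M - 1)) / c"

lemma exp_section_shift:
  assumes "M \<ge> 2" "c > 0"
  shows "exp (- c * section_shift M c) = (real M - 1) * exp (- c\<^sup>2 / 2)"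
proof -
  have "- c * section_shift M c = - c\<^sup>2 / 2 + ln (real M - 1)"
    using assms by (simp add: section_shift_def)
  hence "exp (- c * section_shift M c) = exp (- c\<^sup>2 / 2) * exp (ln (real M - 1))"
    by (simp only: exp_add)
  thus ?thesis using assms by simp
qed

lemma section_shift_above_threshold:
  fixes M :: nat and c \<delta> :: real
  defines "s \<equiv> section_shift M c" and "\<Lambda> \<equiv> ln (real M)"
  assumes M: "M \<ge> 2" and half: "ln (real M - 1) \<ge> \<Lambda> / 2" and "\<Lambda> > 0"
    and \<delta>: "0 < \<delta>" "\<delta> < 1/2" and c: "c > 0" "c\<^sup>2 > (2 + \<delta>) * \<Lambda>"
  shows "0 < s" "s < c" "sqrt \<Lambda> \<le> c - s" "(\<delta> * sqrt \<Lambda>)\<^sup>2 \<le> 10 * s\<^sup>2"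
proof -
  define t where "t = c\<^sup>2 - 2 * \<Lambda>"
  have cs: "c * s = c\<^sup>2 / 2 - ln (real M - 1)" using c by (simp add: s_def section_shift_def)
  have "ln (real M - 1) \<le> \<Lambda>" using M by (simp add: \<Lambda>_def)
  hence cs_t: "c * s \<ge> t / 2" using cs by (simp add: t_def)
  have t: "t > \<delta> * \<Lambda>" "\<delta> * \<Lambda> > 0" using c \<delta> \<open>\<Lambda> > 0\<close> by (auto simp: t_def algebra_simps)
  have "c * s > 0" using cs_t t by linarith
  thus "0 < s" using c by (simp add: zero_less_mult_iff)
  have c_cs: "c * (c - s) = c\<^sup>2 / 2 + ln (real M - 1)"
    using cs by (simp add: algebra_simps power2_eq_square)
  also have "\<dots> > 0" using half \<open>\<Lambda> > 0\<close> zero_le_power2[of c] by linarith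
  finally show "s < c" using c by (simp add: zero_less_mult_iff)
  have "c * sqrt \<Lambda> \<le> c\<^sup>2 / 2 + \<Lambda> / 2"
    using zero_le_power2[of "c - sqrt \<Lambda>"] \<open>\<Lambda> > 0\<close> by (simp add: power2_eq_square algebra_simps)
  also have "\<dots> \<le> c * (c - s)" using c_cs half by simp
  finally show "sqrt \<Lambda> \<le> c - s" using c by simp
  have "\<delta>\<^sup>2 * \<Lambda> * c\<^sup>2 = 2 * (\<delta> * \<Lambda>)\<^sup>2 + \<delta> * (\<delta> * \<Lambda>) * t"
    by (simp add: t_def power2_eq_square algebra_simps)
  also have "\<dots> \<le> 2 * t\<^sup>2 + t\<^sup>2 / 2"
  proof -
    have "(\<delta> * \<Lambda>)\<^sup>2 \<le> t\<^sup>2" using t by (intro power_mono) auto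
    moreover have "\<delta> * (\<delta> * \<Lambda>) * t \<le> (1/2) * t * t"
      using t \<delta> by (intro mult_right_mono mult_mono) auto
    ultimately show ?thesis by (simp add: power2_eq_square)
  qed
  also have "\<dots> \<le> 10 * (c * s)\<^sup>2"
    using power_mono[OF cs_t, of 2] t by (simp add: power_divide)
  finally have "\<delta>\<^sup>2 * \<Lambda> * c\<^sup>2 \<le> 10 * s\<^sup>2 * c\<^sup>2" by (simp add: power_mult_distrib algebra_simps)
  hence "\<delta>\<^sup>2 * \<Lambda> \<le> 10 * s\<^sup>2" using c by simp
  thus "(\<delta> * sqrt \<Lambda>)\<^sup>2 \<le> 10 * s\<^sup>2" using \<open>\<Lambda> > 0\<close> by (simp add: power_mult_distrib)
qed

lemma section_term_above_threshold:
  fixes M :: nat and c \<delta> :: real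
  assumes M: "M \<ge> 2" and half: "ln (real M - 1) \<ge> ln (real M) / 2" and "ln (real M) > 0"
    and \<delta>: "0 < \<delta>" "\<delta> < 1/2" and c: "c > 0" "c\<^sup>2 > (2 + \<delta>) * ln (real M)"
  shows "section_term M c \<ge> 1 - exp (- (\<delta>\<^sup>2 * ln (real M)) / 10000) / (\<delta> * sqrt (ln (real M)))"
proof -
  define s where "s = section_shift M c"
  define y where "y = \<delta> * sqrt (ln (real M))"
  define Q where "Q = (\<integral>x. indicator {s..} x * \<phi> x \<partial>lborel)"
  note shift = section_shift_above_threshold[OF M half \<open>ln (real M) > 0\<close> \<delta> c, folded s_def]
  have y: "y > 0" using \<delta> \<open>ln (real M) > 0\<close> by (simp add: y_def)
  have core: "section_term M c \<ge> 1 - Q - \<phi> s / (c - s)"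
    unfolding Q_def s_def using M c shift(2)
    by (intro section_term_ge_tail exp_section_shift) (auto simp: s_def)
  have estimate: "y * Q + \<phi> s / 2 \<le> exp (- y\<^sup>2 / 10000)"
  proof (rule tail_estimate)
    show "Q \<le> 1/2 - r * \<phi> r" if "0 \<le> r" "r \<le> s" for r
      unfolding Q_def using that shift(1) by (rule std_normal_tail_le_half_minus_interval)
    show "0 \<le> Q" unfolding Q_def
      using std_normal_density_pos by (intro integral_nonneg_AE AE_I2) (simp add: less_imp_le)
  qed (use shift y in \<open>auto simp: y_def Q_def intro: std_normal_tail_Mills\<close>)
  have "y * (1 - section_term M c) \<le> y * (Q + \<phi> s / (c - s))"
    using core y by (intro mult_left_mono) auto
  also have "\<dots> = y * Q + y * (\<phi> s / (c - s))" by (simp add: distrib_left)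
  also have "y * (\<phi> s / (c - s)) \<le> \<phi> s / 2"
  proof -
    have "y \<le> \<delta> * (c - s)" unfolding y_def using shift(3) \<delta> by (intro mult_left_mono) auto
    also have "\<dots> \<le> (c - s) / 2" using shift(2) \<delta> mult_right_mono[of \<delta> "1/2" "c - s"] by simp
    finally have "y / (c - s) \<le> 1/2" using shift(2) by (simp add: divide_le_eq mult.commute)
    hence "\<phi> s * (y / (c - s)) \<le> \<phi> s * (1/2)"
      using std_normal_density_pos[of s] by (intro mult_left_mono) auto
    thus ?thesis by (simp add: mult.commute)
  qed
  finally have "y * (1 - section_term M c) \<le> exp (- y\<^sup>2 / 10000)"
    using estimate by simp
  hence "1 - section_term M c \<le> exp (- y\<^sup>2 / 10000) / y"
    using y by (simp add: le_divide_eq mult.commute)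
  moreover have "y\<^sup>2 = \<delta>\<^sup>2 * ln (real M)"
    using \<open>ln (real M) > 0\<close> by (simp add: y_def power_mult_distrib)
  ultimately show ?thesis by (simp add: y_def)
qed

lemma section_term_near_threshold:
  fixes M :: nat and c :: real
  assumes M: "M \<ge> 2" and "ln (real M) \<ge> 400" and c: "c > 0"
    and c2: "c\<^sup>2 \<ge> 2 * (1 - (1/10) / sqrt (ln (real M))) * ln (real M)"
  shows "section_term M c \<ge> 1/4"
proof -
  define s where "s = section_shift M c"
  define r where "r = sqrt (ln (real M))"
  have r: "r \<ge> 20" "r * r = ln (real M)"
    using \<open>ln (real M) \<ge> 400\<close> by (auto simp: r_def intro: real_le_rsqrt)
  have "2 * (1 - (1/10) / r) * ln (real M) = 2 * ln (real M) - r / 5"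
    using r by (simp add: field_simps)
  hence c2': "c\<^sup>2 \<ge> 2 * ln (real M) - r / 5" using c2 by (simp add: r_def)
  have "r \<le> c"
  proof -
    have "r\<^sup>2 \<le> c\<^sup>2" using c2' r mult_right_mono[of 20 r r] by (simp add: power2_eq_square)
    thus ?thesis by (rule power2_le_imp_le) (use c in simp)
  qed
  have "ln (real M - 1) \<le> ln (real M)" using M by simp
  hence "c * s \<ge> - r / 10"
    using c2' c by (simp add: s_def section_shift_def)
  with \<open>r \<le> c\<close> r have far: "c * (1/5 + s) \<ge> 2"
    by (simp add: algebra_simps)
  hence "0 < c * (1/5 + s)" by linarith
  hence "1/5 + s \<ge> 0" using c by (simp add: zero_less_mult_iff)
  hence core: "section_term M c \<ge> (1 - exp (- c * (1/5 + s))) * (1/2 - 399/1000 * (1/5))"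
    using M c unfolding s_def by (intro section_term_ge_shifted exp_section_shift) auto
  have "exp (- c * (1/5 + s)) \<le> 1/3"
  proof -
    have "exp (- c * (1/5 + s)) \<le> exp (- 2)" using far by simp
    also have "exp (- 2) \<le> 1 / (3::real)"
      using exp_ge_add_one_self[of 2] by (simp add: exp_minus' divide_left_mono)
    finally show ?thesis .
  qed
  hence "(1 - 1/3) * (1/2 - 399/1000 * (1/5)) \<le> (1 - exp (- c * (1/5 + s))) * (1/2 - 399/1000 * (1/5))"
    by (intro mult_right_mono) auto
  thus ?thesis using core by simp
qed

section \<open>Summing over the sections\<close>

lemma ln_minus_one_ge_half_ln:
  assumes "M \<ge> 3"
  shows "ln (real M - 1) \<ge> ln (real M) / 2"
proof -
  have "0 \<le> real M * (real M - 3)" using assms by simp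
  hence "real M \<le> (real M - 1)\<^sup>2" by (simp add: power2_eq_square algebra_simps)
  hence "ln (real M) \<le> ln ((real M - 1)\<^sup>2)" using assms by (intro ln_mono) auto
  also have "\<dots> = 2 * ln (real M - 1)" using assms by (simp add: ln_realpow)
  finally show ?thesis by simp
qed

lemma section_term_ge_indicators:
  fixes M :: nat and c \<nu> \<delta> :: real
  assumes M: "M \<ge> 3" "ln (real M) \<ge> 400" and c: "c > 0" "c\<^sup>2 = \<nu> * ln (real M)"
    and \<delta>: "0 < \<delta>" "\<delta> < 1/2"
  shows "section_term M c \<ge>
    (1 - real M powr (- (1/10000) * \<delta>\<^sup>2) / (\<delta> * sqrt (ln (real M)))) * (if \<nu> > 2 + \<delta> then 1 else 0)
    + 1/4 * (if 2 * (1 - (1/10) / sqrt (ln (real M))) \<le> \<nu> \<and> \<nu> \<le> 2 + \<delta> then 1 else 0)"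
proof -
  have powr: "real M powr (- (1/10000) * \<delta>\<^sup>2) = exp (- (\<delta>\<^sup>2 * ln (real M)) / 10000)"
    using M by (simp add: powr_def algebra_simps)
  consider "\<nu> > 2 + \<delta>" | "\<not> \<nu> > 2 + \<delta>" "2 * (1 - (1/10) / sqrt (ln (real M))) \<le> \<nu>"
    | "\<not> \<nu> > 2 + \<delta>" "\<not> 2 * (1 - (1/10) / sqrt (ln (real M))) \<le> \<nu>"
    by blast
  thus ?thesis
  proof cases
    case 1
    hence "c\<^sup>2 > (2 + \<delta>) * ln (real M)" using M c by simp
    with M c \<delta> ln_minus_one_ge_half_ln[OF M(1)] show ?thesis
      unfolding powr using section_term_above_threshold[of M \<delta> c] 1 by simp
  next
    case 2
    hence "c\<^sup>2 \<ge> 2 * (1 - (1/10) / sqrt (ln (real M))) * ln (real M)"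
      using M c by (simp add: mult_right_mono)
    thus ?thesis using section_term_near_threshold[of M c] M c 2 by simp
  next
    case 3
    thus ?thesis using section_term_nonneg[of M c] by simp
  qed
qed

lemma x_tau_ge_indicators:
  fixes M L n :: nat and Pl :: "nat \<Rightarrow> real" and P R \<tau> \<delta> :: real
  assumes M: "M \<ge> 3" "ln (real M) \<ge> 400" and Pl: "\<And>l. Pl l > 0"
    and "P > 0" "R > 0" "\<tau> > 0" "n \<ge> 1" and rate: "real L * ln (real M) = real n * R"
    and \<delta>: "0 < \<delta>" "\<delta> < 1/2"
  shows "x_tau n M L Pl P \<tau> \<ge>
    (1 - real M powr (- (1/10000) * \<delta>\<^sup>2) / (\<delta> * sqrt (ln (real M))))
      * (\<Sum>l=1..L. Pl l / P * (if real L * Pl l / (R * \<tau>\<^sup>2) > 2 + \<delta> then 1 else 0))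
    + 1/4 * (\<Sum>l=1..L. Pl l / P *
        (if 2 * (1 - (1/10) / sqrt (ln (real M))) \<le> real L * Pl l / (R * \<tau>\<^sup>2)
            \<and> real L * Pl l / (R * \<tau>\<^sup>2) \<le> 2 + \<delta> then 1 else 0))"
proof -
  define coef where "coef = 1 - real M powr (- (1/10000) * \<delta>\<^sup>2) / (\<delta> * sqrt (ln (real M)))"
  define \<nu> where "\<nu> l = real L * Pl l / (R * \<tau>\<^sup>2)" for l
  define above where "above l = (if \<nu> l > 2 + \<delta> then 1 else 0 :: real)" for l
  define near where "near l = (if 2 * (1 - (1/10) / sqrt (ln (real M))) \<le> \<nu> l \<and> \<nu> l \<le> 2 + \<delta>
    then 1 else 0 :: real)" for l
  have per_section: "coef * above l + 1/4 * near l \<le> section_term M (sqrt (real n * Pl l) / \<tau>)" for l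
  proof -
    have "(sqrt (real n * Pl l) / \<tau>)\<^sup>2 = (real n * R) * Pl l / (R * \<tau>\<^sup>2)"
      using Pl[of l] \<open>R > 0\<close> \<open>n \<ge> 1\<close> by (simp add: power_divide)
    also have "\<dots> = \<nu> l * ln (real M)" unfolding rate[symmetric] \<nu>_def by simp
    finally show ?thesis
      unfolding coef_def above_def near_def
      using Pl[of l] assms by (intro section_term_ge_indicators) auto
  qed
  have "coef * (\<Sum>l=1..L. Pl l / P * above l) + 1/4 * (\<Sum>l=1..L. Pl l / P * near l)
      = (\<Sum>l=1..L. Pl l / P * (coef * above l + 1/4 * near l))"
    by (simp add: sum_distrib_left sum.distrib algebra_simps)
  also have "\<dots> \<le> x_tau n M L Pl P \<tau>"
    unfolding x_tau_def using per_section Pl \<open>P > 0\<close>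
    by (intro sum_mono mult_left_mono) (auto simp: less_imp_le)
  finally show ?thesis by (simp only: coef_def above_def near_def \<nu>_def)
qed

lemma exp_power_alloc_pos:
  assumes "sigma2 > 0" "P > 0" "L \<ge> 1"
  shows "exp_power_alloc P (capacity P sigma2) L l > 0"
proof -
  have "capacity P sigma2 > 0" unfolding capacity_def using assms by (simp add: ln_gt_zero)
  thus ?thesis using assms by (simp add: exp_power_alloc_def)
qed

theorem mainTheorem6:
  shows "\<exists>\<kappa>1>0. \<exists>\<kappa>2>0. \<forall>(sigma2::real) (P::real) (R::real) (\<tau>::real).
    sigma2 > 0 \<and> P > 0 \<and> R > 0 \<and> \<tau> > 0 \<longrightarrow>
    (\<exists>M0::nat. \<forall>(M::nat) (L::nat) (n::nat).
       M \<ge> M0 \<and> L \<ge> 1 \<and> n \<ge> 1 \<and> real L * ln (real M) = real n * R \<longrightarrow>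
       (let C = capacity P sigma2;
            Pl = exp_power_alloc P C L;
            \<nu> = (\<lambda>l. real L * Pl l / (R * \<tau>\<^sup>2))
        in \<forall>\<delta>::real. 0 < \<delta> \<and> \<delta> < 1/2 \<longrightarrow>
           x_tau n M L Pl P \<tau> \<ge>
             (1 - real M powr (- \<kappa>1 * \<delta>\<^sup>2) / (\<delta> * sqrt (ln (real M))))
               * (\<Sum>l=1..L. Pl l / P * (if \<nu> l > 2 + \<delta> then 1 else 0))
             + 1/4 * (\<Sum>l=1..L. Pl l / P *
                 (if 2 * (1 - \<kappa>2 / sqrt (ln (real M))) \<le> \<nu> l \<and> \<nu> l \<le> 2 + \<delta>
                  then 1 else 0))))"
proof -
  have large: "M \<ge> 3 \<and> ln (real M) \<ge> 400" if "nat \<lceil>exp (400::real)\<rceil> + 3 \<le> M" for M :: nat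
  proof -
    have "real (nat \<lceil>exp (400::real)\<rceil>) \<le> real M" using that by (intro of_nat_mono) linarith
    hence "exp 400 \<le> real M" using real_nat_ceiling_ge[of "exp 400"] by linarith
    thus ?thesis using that by (simp add: ln_ge_iff)
  qed
  show ?thesis
    unfolding Let_def
  proof (rule exI[of _ "1/10000::real"], rule conjI, simp, rule exI[of _ "1/10::real"],
      rule conjI, simp, intro allI impI exI[of _ "nat \<lceil>exp (400::real)\<rceil> + 3"]
      x_tau_ge_indicators exp_power_alloc_pos)
  qed (auto dest: large)
qed

end
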